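(* Let $k\ge 3$ and $s\geq k+2$ be integers, and let $A,B\ge1$ be real numbers with $B^k\leq A$. Then $\Xi(A,B)\ll A^{s-1}B^{s-k}$, with implicit constant depending only on $k,s$.
   Context: $\Xi(A,B)$ denotes the number of pairs $(\mathbf{a},\mathbf{x})$ with $\mathbf{a}\in(\mathbb{Z}\setminus\{0\})^s$, $\mathbf{x}\in\mathbb{Z}^s$, satisfying $a_1x_1^k+\dots+a_sx_s^k=0$ and $|\mathbf{a}|\le A$, $0<|\mathbf{x}|\le B$, where $|\mathbf{x}|=\max_j|x_j|$. *)

theory Defs
  imports "HOL-Analysis.Analysis"
begin

text \<open>Vectors in Z^s are represented as functions nat => int supported on {0..<s}.
  sup-norm: maximum of absolute values of the s coordinates.\<close>

definition supnorm :: "nat \<Rightarrow> (nat \<Rightarrow> int) \<Rightarrow> int" where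
  "supnorm s x = Max (insert 0 ((\<lambda>j. \<bar>x j\<bar>) ` {0..<s}))"

definition Xi_set :: "nat \<Rightarrow> nat \<Rightarrow> real \<Rightarrow> real \<Rightarrow> ((nat \<Rightarrow> int) \<times> (nat \<Rightarrow> int)) set" where
  "Xi_set k s A B = {(a, x).
      (\<forall>j. j \<ge> s \<longrightarrow> a j = 0 \<and> x j = 0) \<and>
      (\<forall>j<s. a j \<noteq> 0) \<and>
      (\<Sum>j<s. a j * x j ^ k) = 0 \<and>
      real_of_int (supnorm s a) \<le> A \<and>
      0 < supnorm s x \<and> real_of_int (supnorm s x) \<le> B}"

definition Xi :: "nat \<Rightarrow> nat \<Rightarrow> real \<Rightarrow> real \<Rightarrow> nat" where
  "Xi k s A B = card (Xi_set k s A B)"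

end

theory Submission
  imports Defs
begin

text \<open>For fixed nonzero \<open>x\<close> with \<open>|x| \<le> B\<close>, the admissible \<open>a\<close> are the zeros, in the box
  of radius \<open>A\<close>, of the linear form with coefficients \<open>y_j = x_j^k\<close>. With \<open>g = gcd(y) = gcd(x)^k\<close>,
  every multiple \<open>t g\<close> with \<open>|t| \<le> A |x|^k / g\<close> is a value of the form at a point of size
  \<open>O(A)\<close>; this is where \<open>|x|^k \<le> B^k \<le> A\<close> is used. Translating the zeros by these points
  maps zeros \<open>\<times>\<close> multiples injectively into a box of radius \<open>O(A)\<close>, so there are
  \<open>O(A^(s-1) (gcd(x) / |x|)^k)\<close> zeros. Summing over \<open>x\<close>, grouped by the common divisors \<open>d\<close>
  of its coordinates, gives \<open>O(B^(s-k)) \<Sum>_d d^(-2)\<close>, because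
  \<open>\<Sum>_(0 < |z| \<le> T) |z|^(-k) = O(T^(s-k))\<close> for \<open>k < s\<close>.\<close>

section \<open>Integer boxes and the sup-norm\<close>

definition lattice_box :: "nat \<Rightarrow> int \<Rightarrow> (nat \<Rightarrow> int) set" where
  "lattice_box s r = {x. (\<forall>j<s. \<bar>x j\<bar> \<le> r) \<and> (\<forall>j\<ge>s. x j = 0)}"

lemma lattice_box_Suc:
  "lattice_box (Suc s) r = (\<lambda>(x, v). x(s := v)) ` (lattice_box s r \<times> {-r..r})"
proof (intro set_eqI iffI)
  fix x assume x: "x \<in> lattice_box (Suc s) r"
  then have "(x(s := 0), x s) \<in> lattice_box s r \<times> {-r..r}"
    by (auto simp: lattice_box_def)
  moreover have "x = (\<lambda>(x, v). x(s := v)) (x(s := 0), x s)" by simp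
  ultimately show "x \<in> (\<lambda>(x, v). x(s := v)) ` (lattice_box s r \<times> {-r..r})" by blast
qed (auto simp: lattice_box_def less_Suc_eq)

lemma inj_on_fun_upd_lattice_box:
  "inj_on (\<lambda>(x, v). x(s := v)) (lattice_box s r \<times> V)"
proof (rule inj_onI, clarify)
  fix x v y w assume "x \<in> lattice_box s r" "y \<in> lattice_box s r" and eq: "x(s := v) = y(s := w)"
  then have "x s = y s" by (simp add: lattice_box_def)
  with eq show "x = y \<and> v = w" by (metis fun_upd_eqD fun_upd_triv fun_upd_upd)
qed

lemma lattice_box_0 [simp]: "lattice_box 0 r = {\<lambda>_. 0}"
  by (auto simp: lattice_box_def)

lemma finite_lattice_box: "finite (lattice_box s r)"
  by (induction s) (simp_all add: lattice_box_Suc)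

lemma card_lattice_box: "card (lattice_box s r) = nat (2 * r + 1) ^ s"
  by (induction s) (simp_all add: lattice_box_Suc card_image inj_on_fun_upd_lattice_box
      card_cartesian_product)

lemma lattice_box_mono: "r \<le> r' \<Longrightarrow> lattice_box s r \<subseteq> lattice_box s r'"
  by (auto simp: lattice_box_def)

lemma supnorm_nonneg: "0 \<le> supnorm s x"
  by (auto simp: supnorm_def)

lemma abs_le_supnorm: "j < s \<Longrightarrow> \<bar>x j\<bar> \<le> supnorm s x"
  unfolding supnorm_def by (rule Max_ge) auto

lemma supnorm_le_iff: "0 \<le> r \<Longrightarrow> supnorm s x \<le> r \<longleftrightarrow> (\<forall>j<s. \<bar>x j\<bar> \<le> r)"
  by (auto simp: supnorm_def)

lemma supnorm_attained:
  assumes "0 < supnorm s x" shows "\<exists>m<s. \<bar>x m\<bar> = supnorm s x"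
proof -
  have "supnorm s x \<in> insert 0 ((\<lambda>j. \<bar>x j\<bar>) ` {0..<s})"
    unfolding supnorm_def by (rule Max_in) auto
  with assms show ?thesis by auto
qed

lemma supnorm_mult:
  assumes "0 \<le> d" shows "supnorm s (\<lambda>j. d * x j) = d * supnorm s x"
proof -
  have "mono ((*) d)" using assms by (auto simp: mono_def mult_left_mono)
  then have "d * supnorm s x = Max ((*) d ` insert 0 ((\<lambda>j. \<bar>x j\<bar>) ` {0..<s}))"
    unfolding supnorm_def by (rule mono_Max_commute) auto
  also have "(*) d ` insert 0 ((\<lambda>j. \<bar>x j\<bar>) ` {0..<s}) = insert 0 ((\<lambda>j. \<bar>d * x j\<bar>) ` {0..<s})"
    using assms by (auto simp: abs_mult image_image)
  finally show ?thesis by (simp add: supnorm_def)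
qed

lemma lattice_box_iff_supnorm:
  "0 \<le> r \<Longrightarrow> x \<in> lattice_box s r \<longleftrightarrow> supnorm s x \<le> r \<and> (\<forall>j\<ge>s. x j = 0)"
  by (simp add: lattice_box_def supnorm_le_iff)

lemma supnorm_pos_iff:
  assumes "x \<in> lattice_box s r" shows "0 < supnorm s x \<longleftrightarrow> x \<noteq> (\<lambda>_. 0)"
proof -
  have "(\<forall>j. x j = 0) \<longleftrightarrow> (\<forall>j<s. x j = 0)"
    using assms by (auto simp: lattice_box_def) (meson not_le)+
  then show ?thesis using supnorm_le_iff[of 0 s x] by (auto simp: fun_eq_iff not_less)
qed

lemma supnorm_lattice_shell:
  assumes "0 \<le> r" "z \<in> lattice_box s (r + 1) - lattice_box s r"
  shows "supnorm s z = r + 1"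
proof -
  obtain j where "j < s" "r < \<bar>z j\<bar>" using assms by (auto simp: lattice_box_def)
  then have "r + 1 \<le> supnorm s z" using abs_le_supnorm[of j s z] by linarith
  moreover have "supnorm s z \<le> r + 1" using assms by (simp add: lattice_box_iff_supnorm)
  ultimately show ?thesis by simp
qed

section \<open>Zeros of a linear form in a box\<close>

lemma Gcd_image_eq_sum:
  fixes x :: "'a \<Rightarrow> int"
  assumes "finite A" shows "\<exists>c. Gcd (x ` A) = (\<Sum>j\<in>A. c j * x j)"
  using assms
proof (induction A rule: finite_induct)
  case empty then show ?case by simp
next
  case (insert i A)
  then obtain c where c: "Gcd (x ` A) = (\<Sum>j\<in>A. c j * x j)" by blast
  obtain u v where uv: "u * x i + v * Gcd (x ` A) = gcd (x i) (Gcd (x ` A))"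
    using bezout_int by blast
  define c' where "c' j = (if j = i then u else v * c j)" for j
  have "(\<Sum>j\<in>insert i A. c' j * x j) = u * x i + v * (\<Sum>j\<in>A. c j * x j)"
    using insert(1,2) by (auto simp: c'_def sum_distrib_left mult.assoc intro!: sum.cong)
  with c uv show ?case by (metis image_insert Gcd_insert)
qed

lemma Gcd_image_power:
  fixes x :: "'a \<Rightarrow> int"
  assumes "finite A" "0 < k" shows "Gcd ((\<lambda>j. x j ^ k) ` A) = Gcd (x ` A) ^ k"
  using assms by (induction A rule: finite_induct) (simp_all del: gcd_exp add: gcd_exp[symmetric])

lemma Gcd_image_pos:
  fixes x :: "'a \<Rightarrow> int"
  assumes "j \<in> A" "x j \<noteq> 0" shows "0 < Gcd (x ` A)"
  using assms Gcd_int_greater_eq_0[of "x ` A"] by (auto simp: order_le_less)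

lemma Gcd_lattice_box_bounds:
  assumes "x \<in> lattice_box s Q" "x \<noteq> (\<lambda>_. 0)"
  shows "0 < Gcd (x ` {..<s}) \<and> Gcd (x ` {..<s}) \<le> Q"
proof -
  obtain j where j: "j < s" "x j \<noteq> 0"
    using assms by (auto simp: lattice_box_def fun_eq_iff) (meson not_le)
  then have "Gcd (x ` {..<s}) \<le> \<bar>x j\<bar>"
    using dvd_imp_le_int[OF j(2) Gcd_dvd[of "x j" "x ` {..<s}"]] by simp
  also have "\<dots> \<le> Q" using assms(1) j(1) by (simp add: lattice_box_def)
  finally show ?thesis using Gcd_image_pos[of j "{..<s}" x] j by simp
qed

lemma linear_form_attains_multiple:
  fixes y c :: "nat \<Rightarrow> int"
  assumes m: "m < s" "\<bar>y m\<bar> = Y" and y_le: "\<forall>j<s. \<bar>y j\<bar> \<le> Y" and Y: "0 < Y" "Y \<le> P"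
    and g: "g = (\<Sum>j<s. c j * y j)" "0 < g" and t: "\<bar>t\<bar> * g \<le> P * Y"
  shows "\<exists>w \<in> lattice_box s ((int s + 1) * P). (\<Sum>j<s. w j * y j) = t * g"
proof -
  txt \<open>Reduce the coefficients of \<open>t * g = (\<Sum>j<s. t * c j * y j)\<close> modulo \<open>Y\<close> off the
    coordinate \<open>m\<close>; the rest is divisible by \<open>y m = \<plusminus>Y\<close> and is absorbed by coordinate \<open>m\<close>.\<close>
  define b where "b j = (if j < s \<and> j \<noteq> m then (t * c j) mod Y else 0)" for j
  define R where "R = (\<Sum>j<s. b j * y j)"
  have b: "0 \<le> b j \<and> b j \<le> Y" for j
    using Y by (auto simp: b_def intro: less_imp_le)
  have "y m dvd (t * c j - b j) * y j" if "j < s" for j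
  proof (cases "j = m")
    case False
    then have "t * c j - b j = Y * (t * c j div Y)"
      using that by (simp add: b_def minus_mod_eq_mult_div)
    then show ?thesis using m(2) by (metis abs_dvd_iff dvd_refl dvd_mult2 mult.assoc)
  qed simp
  then have "y m dvd (\<Sum>j<s. (t * c j - b j) * y j)" by (auto intro: dvd_sum)
  also have "(\<Sum>j<s. (t * c j - b j) * y j) = t * g - R"
    by (simp add: g R_def sum_distrib_left sum_subtractf algebra_simps)
  finally obtain q where q: "t * g - R = y m * q" by (elim dvdE)
  define w where "w = b(m := q)"
  have "w j * y j = b j * y j + (if j = m then y m * q else 0)" for j
    by (simp add: w_def b_def)
  then have w_sum: "(\<Sum>j<s. w j * y j) = t * g"
    using m(1) q by (simp add: sum.distrib R_def[symmetric])
  have "\<bar>R\<bar> \<le> (\<Sum>j<s. Y * Y)"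
    unfolding R_def using b y_le
    by (intro order_trans[OF sum_abs] sum_mono) (simp add: abs_mult mult_mono')
  also have "\<dots> \<le> int s * P * Y" using Y by (simp add: mult_right_mono mult_left_mono flip: mult.assoc)
  finally have R: "\<bar>R\<bar> \<le> int s * P * Y" .
  have "\<bar>q\<bar> * Y = \<bar>t * g - R\<bar>" using q m(2) by (simp add: abs_mult)
  also have "\<dots> \<le> \<bar>t\<bar> * g + int s * P * Y"
    using R g(2) abs_triangle_ineq4[of "t * g" R] by (simp add: abs_mult)
  also have "\<dots> \<le> ((int s + 1) * P) * Y" using t by (simp add: algebra_simps)
  finally have "\<bar>q\<bar> \<le> (int s + 1) * P" using Y by simp
  moreover have "\<bar>b j\<bar> \<le> (int s + 1) * P" for j
  proof -
    have "\<bar>b j\<bar> \<le> P" using b[of j] Y by simp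
    also have "P \<le> (int s + 1) * P" using Y by (simp add: algebra_simps)
    finally show ?thesis .
  qed
  moreover have "b j = 0" if "s \<le> j" for j using that by (simp add: b_def)
  ultimately have "w \<in> lattice_box s ((int s + 1) * P)"
    using m(1) by (auto simp: lattice_box_def w_def)
  with w_sum show ?thesis by blast
qed

lemma card_linear_form_zeros_mult_le:
  fixes y c :: "nat \<Rightarrow> int"
  assumes m: "m < s" "\<bar>y m\<bar> = Y" and y_le: "\<forall>j<s. \<bar>y j\<bar> \<le> Y" and Y: "0 < Y" "Y \<le> P"
    and g: "g = (\<Sum>j<s. c j * y j)" "0 < g"
  defines "T \<equiv> P * Y div g"
  shows "card {a \<in> lattice_box s P. (\<Sum>j<s. a j * y j) = 0} * card {-T..T}
           \<le> card (lattice_box s ((int s + 2) * P))"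
proof -
  define S where "S = {a \<in> lattice_box s P. (\<Sum>j<s. a j * y j) = 0}"
  have "\<forall>t\<in>{-T..T}. \<exists>w \<in> lattice_box s ((int s + 1) * P). (\<Sum>j<s. w j * y j) = t * g"
  proof
    fix t assume "t \<in> {-T..T}"
    then have "\<bar>t\<bar> * g \<le> T * g" using g(2) by (simp add: mult_right_mono abs_le_iff)
    also have "T * g \<le> P * Y"
      using div_mult_mod_eq[of "P * Y" g] pos_mod_sign[OF g(2), of "P * Y"] unfolding T_def by linarith
    finally show "\<exists>w \<in> lattice_box s ((int s + 1) * P). (\<Sum>j<s. w j * y j) = t * g"
      by (rule linear_form_attains_multiple[OF m y_le Y g])
  qed
  then obtain W where W: "\<And>t. t \<in> {-T..T} \<Longrightarrow>
      W t \<in> lattice_box s ((int s + 1) * P) \<and> (\<Sum>j<s. W t j * y j) = t * g"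
    by metis
  define f where "f = (\<lambda>(a, t) j. a j + W t j)"
  have value_f: "(\<Sum>j<s. f (a, t) j * y j) = t * g" if "a \<in> S" "t \<in> {-T..T}" for a t
    using that W[of t] by (simp add: f_def S_def algebra_simps sum.distrib)
  have "inj_on f (S \<times> {-T..T})"
  proof (rule inj_onI, clarify)
    fix a t a' t' assume "a \<in> S" "t \<in> {-T..T}" "a' \<in> S" "t' \<in> {-T..T}" and eq: "f (a, t) = f (a', t')"
    then have "t = t'" using value_f g(2) by (metis mult_right_cancel less_irrefl)
    with eq show "a = a' \<and> t = t'" by (auto simp: f_def fun_eq_iff)
  qed
  moreover have "f ` (S \<times> {-T..T}) \<subseteq> lattice_box s ((int s + 2) * P)"
    using W by (fastforce simp: S_def f_def lattice_box_def algebra_simps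
        intro: order_trans[OF abs_triangle_ineq add_mono])
  ultimately have "card (S \<times> {-T..T}) \<le> card (lattice_box s ((int s + 2) * P))"
    by (rule card_inj_on_le[OF _ _ finite_lattice_box])
  then show ?thesis by (simp add: S_def card_cartesian_product)
qed

lemma card_linear_form_zeros_le:
  fixes y c :: "nat \<Rightarrow> int"
  assumes m: "m < s" "\<bar>y m\<bar> = Y" and y_le: "\<forall>j<s. \<bar>y j\<bar> \<le> Y" and Y: "0 < Y" "Y \<le> P"
    and g: "g = (\<Sum>j<s. c j * y j)" "0 < g"
  shows "real (card {a \<in> lattice_box s P. (\<Sum>j<s. a j * y j) = 0})
           \<le> (2 * real s + 5) ^ s * real_of_int P ^ (s - 1) * g / Y"
proof -
  define N where "N = card {a \<in> lattice_box s P. (\<Sum>j<s. a j * y j) = 0}"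
  define T where "T = P * Y div g"
  have P: "0 < P" using Y by simp
  have "P * Y < (T + 1) * g"
    using g(2) by (simp add: T_def distrib_right) (metis div_mult_mod_eq pos_mod_bound add_less_cancel_left)
  also have "\<dots> \<le> (2 * T + 1) * g"
    using P Y g(2) by (intro mult_right_mono) (auto simp: T_def pos_imp_zdiv_nonneg_iff)
  finally have "real_of_int P * Y \<le> (2 * T + 1) * g" by (simp flip: of_int_mult)
  then have "real N * (real_of_int P * Y) \<le> real N * (2 * T + 1) * g"
    by (simp add: mult_left_mono mult.assoc)
  also have "real N * (2 * T + 1) = real (N * card {-T..T})"
    using P Y g(2) by (simp add: T_def pos_imp_zdiv_nonneg_iff)
  also have "\<dots> \<le> real (nat (2 * ((int s + 2) * P) + 1) ^ s)"
    using card_linear_form_zeros_mult_le[OF m y_le Y g]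
    by (simp only: N_def T_def card_lattice_box of_nat_le_iff)
  also have "\<dots> = real_of_int (2 * ((int s + 2) * P) + 1) ^ s"
    using P by simp
  also have "\<dots> \<le> ((2 * real s + 5) * P) ^ s"
    using P by (intro power_mono) (simp_all add: algebra_simps)
  also have "((2 * real s + 5) * P) ^ s = real_of_int P * ((2 * real s + 5) ^ s * P ^ (s - 1))"
    using m(1) by (cases s) (simp_all add: power_mult_distrib)
  finally have "real_of_int P * (real N * Y) \<le> real_of_int P * ((2 * real s + 5) ^ s * P ^ (s - 1) * g)"
    using g(2) by (simp add: mult_right_mono algebra_simps)
  then have "real N * Y \<le> (2 * real s + 5) ^ s * P ^ (s - 1) * g"
    using P by simp
  then show ?thesis
    using Y unfolding N_def by (simp add: field_simps)
qed

lemma card_diagonal_form_zeros_le: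
  assumes k: "0 < k" and x: "x \<in> lattice_box s Q" "x \<noteq> (\<lambda>_. 0)" and QP: "Q ^ k \<le> P"
  shows "real (card {a \<in> lattice_box s P. (\<Sum>j<s. a j * x j ^ k) = 0})
           \<le> (2 * real s + 5) ^ s * real_of_int P ^ (s - 1) *
             (real_of_int (Gcd (x ` {..<s})) / real_of_int (supnorm s x)) ^ k"
proof -
  define X where "X = supnorm s x"
  define G where "G = Gcd (x ` {..<s})"
  have X: "0 < X" using supnorm_pos_iff[OF x(1)] x(2) by (simp add: X_def)
  then obtain m where m: "m < s" "\<bar>x m\<bar> = X" using supnorm_attained X_def by blast
  then have "X \<le> Q" using x(1) by (auto simp: lattice_box_def)
  then have XP: "X ^ k \<le> P" using QP X by (meson order_trans power_mono less_imp_le)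
  have x_le: "\<forall>j<s. \<bar>x j ^ k\<bar> \<le> X ^ k"
    by (auto simp: X_def power_abs intro: power_mono abs_le_supnorm)
  obtain c where "Gcd ((\<lambda>j. x j ^ k) ` {..<s}) = (\<Sum>j<s. c j * x j ^ k)"
    using Gcd_image_eq_sum by blast
  then have c: "G ^ k = (\<Sum>j<s. c j * x j ^ k)" by (simp add: G_def Gcd_image_power k)
  have G: "0 < G" using Gcd_lattice_box_bounds[OF x] by (simp add: G_def)
  have "real (card {a \<in> lattice_box s P. (\<Sum>j<s. a j * x j ^ k) = 0})
          \<le> (2 * real s + 5) ^ s * real_of_int P ^ (s - 1) * (G ^ k) / (X ^ k)"
    using m X G by (intro card_linear_form_zeros_le[OF m(1) _ x_le _ XP c]) (simp_all add: power_abs)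
  then show ?thesis by (simp add: X_def G_def power_divide)
qed

section \<open>Sums over lattice points\<close>

lemma power_diff_le:
  fixes a b :: real
  assumes "0 \<le> b" "b \<le> a" shows "a ^ n - b ^ n \<le> n * (a - b) * a ^ (n - 1)"
proof (induction n)
  case (Suc n)
  have "a ^ Suc n - b ^ Suc n = a * (a ^ n - b ^ n) + (a - b) * b ^ n" by (simp add: algebra_simps)
  also have "\<dots> \<le> a * (n * (a - b) * a ^ (n - 1)) + (a - b) * a ^ n"
    using Suc assms by (intro add_mono mult_left_mono power_mono) auto
  also have "\<dots> = Suc n * (a - b) * a ^ n" by (cases n) (auto simp: algebra_simps)
  finally show ?case by simp
qed simp

lemma card_lattice_shell_le:
  "real (card (lattice_box s (int T + 1) - lattice_box s (int T)))
     \<le> 2 * real s * 3 ^ (s - 1) * (real T + 1) ^ (s - 1)"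
proof -
  have "card (lattice_box s (int T + 1) - lattice_box s (int T)) = (2 * T + 3) ^ s - (2 * T + 1) ^ s"
    using lattice_box_mono[of "int T" "int T + 1" s]
    by (simp add: card_Diff_subset finite_lattice_box card_lattice_box nat_add_distrib
        nat_mult_distrib add.commute)
  then have "real (card (lattice_box s (int T + 1) - lattice_box s (int T)))
               = real (2 * T + 3) ^ s - real (2 * T + 1) ^ s"
    by (simp add: of_nat_diff power_mono)
  also have "\<dots> \<le> s * (real (2 * T + 3) - real (2 * T + 1)) * real (2 * T + 3) ^ (s - 1)"
    by (rule power_diff_le) auto
  also have "\<dots> \<le> 2 * s * (3 * (real T + 1)) ^ (s - 1)"
    by (auto intro!: mult_left_mono power_mono)
  finally show ?thesis by (simp only: power_mult_distrib mult.assoc)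
qed

lemma sum_inverse_supnorm_power_le:
  assumes "k < s"
  shows "(\<Sum>z \<in> lattice_box s (int T) - {\<lambda>_. 0}. 1 / real_of_int (supnorm s z) ^ k)
           \<le> 2 * real s * 3 ^ (s - 1) * real T ^ (s - k)"
proof (induction T)
  case 0
  have empty: "lattice_box s 0 - {\<lambda>_. 0} = {}"
    using supnorm_pos_iff[of _ s 0] by (auto simp: lattice_box_iff_supnorm)
  show ?case using assms by (simp only: of_nat_0 empty sum.empty) simp
next
  case (Suc T)
  define c :: real where "c = 2 * real s * 3 ^ (s - 1)"
  define e where "e = s - k"
  define f where "f z = 1 / real_of_int (supnorm s z) ^ k" for z
  define Shell where "Shell = lattice_box s (int T + 1) - lattice_box s (int T)"
  have e: "0 < e" using assms by (simp add: e_def)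
  have "(\<lambda>_. 0) \<in> lattice_box s (int T)" by (simp add: lattice_box_def)
  then have split: "lattice_box s (int (Suc T)) - {\<lambda>_. 0} = (lattice_box s (int T) - {\<lambda>_. 0}) \<union> Shell"
    using lattice_box_mono[of "int T" "int T + 1" s] by (auto simp: Shell_def add.commute)
  have "sum f Shell = real (card Shell) / (real T + 1) ^ k"
    using supnorm_lattice_shell[of "int T" _ s] by (simp add: Shell_def f_def add.commute)
  also have "\<dots> \<le> c * (real T + 1) ^ (s - 1) / (real T + 1) ^ k"
    using card_lattice_shell_le[of s T] by (simp add: Shell_def c_def divide_right_mono)
  also have "\<dots> = c * (real T + 1) ^ (e - 1)"
    using assms by (simp add: e_def power_diff)
  finally have shell: "sum f Shell \<le> c * (real T + 1) ^ (e - 1)" .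
  have "real T ^ e + (real T + 1) ^ (e - 1) \<le> real T * (real T + 1) ^ (e - 1) + (real T + 1) ^ (e - 1)"
    using e by (cases e) (auto intro!: mult_left_mono power_mono)
  also have "\<dots> = (real T + 1) ^ e" using e by (cases e) (simp_all add: algebra_simps)
  finally have step: "c * real T ^ e + c * (real T + 1) ^ (e - 1) \<le> c * (real T + 1) ^ e"
    by (simp add: c_def mult_left_mono flip: distrib_left)
  have "sum f (lattice_box s (int (Suc T)) - {\<lambda>_. 0})
          = sum f (lattice_box s (int T) - {\<lambda>_. 0}) + sum f Shell"
    unfolding split by (rule sum.union_disjoint) (auto simp: finite_lattice_box Shell_def)
  also have "\<dots> \<le> c * real T ^ e + c * (real T + 1) ^ (e - 1)"
    using Suc.IH shell by (simp add: f_def c_def e_def)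
  also note step
  finally show ?case by (simp add: f_def c_def e_def add.commute)
qed

lemma sum_inverse_squares_le: "(\<Sum>d=1..n. 1 / real d ^ 2) \<le> pi ^ 2 / 6"
proof -
  have "(\<Sum>d=1..n. 1 / real d ^ 2) = (\<Sum>i<n. 1 / real (Suc i) ^ 2)"
    using sum.atLeast1_atMost_eq[of "\<lambda>d. 1 / real d ^ 2"] by simp
  also have "\<dots> \<le> (\<Sum>i. 1 / real (Suc i) ^ 2)"
    using inverse_squares_sums by (intro sum_le_suminf) (auto simp: sums_iff)
  finally show ?thesis using inverse_squares_sums by (simp add: sums_iff)
qed

lemma lattice_box_multiples:
  assumes d: "0 < d"
  shows "{x \<in> lattice_box s Q. \<forall>j<s. d dvd x j} = (\<lambda>z j. d * z j) ` lattice_box s (Q div d)"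
proof (intro set_eqI iffI)
  fix x assume x: "x \<in> {x \<in> lattice_box s Q. \<forall>j<s. d dvd x j}"
  then have "x j = d * (x j div d)" for j
    by (cases "j < s") (auto simp: lattice_box_def)
  then have "x = (\<lambda>j. d * (x j div d))" by simp
  moreover have "(\<lambda>j. x j div d) \<in> lattice_box s (Q div d)"
    using x d by (auto simp: lattice_box_def abs_div zdiv_mono1)
  ultimately show "x \<in> (\<lambda>z j. d * z j) ` lattice_box s (Q div d)"
    by (rule image_eqI[where f = "\<lambda>z j. d * z j"])
next
  fix x assume "x \<in> (\<lambda>z j. d * z j) ` lattice_box s (Q div d)"
  then obtain z where z: "z \<in> lattice_box s (Q div d)" and x: "x = (\<lambda>j. d * z j)" by blast
  have "\<bar>x j\<bar> \<le> Q" if "j < s" for j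
  proof -
    have "\<bar>x j\<bar> \<le> d * (Q div d)" using z that d by (simp add: x lattice_box_def abs_mult)
    also have "\<dots> \<le> Q"
      using div_mult_mod_eq[of Q d] pos_mod_sign[OF d, of Q] by (simp only: mult.commute[of d])
    finally show ?thesis .
  qed
  with z show "x \<in> {x \<in> lattice_box s Q. \<forall>j<s. d dvd x j}"
    by (auto simp: x lattice_box_def)
qed

lemma sum_multiples_supnorm_power_le:
  fixes d :: nat
  assumes s: "k + 2 \<le> s" and d: "0 < d" and Q: "0 \<le> Q"
  shows "(\<Sum>x \<in> {x \<in> lattice_box s Q - {\<lambda>_. 0}. \<forall>j<s. int d dvd x j}.
            (real d / real_of_int (supnorm s x)) ^ k)
           \<le> 2 * real s * 3 ^ (s - 1) * real_of_int Q ^ (s - k) / real d ^ 2"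
proof -
  define T where "T = nat (Q div int d)"
  define scale where "scale z = (\<lambda>j. int d * z j)" for z :: "nat \<Rightarrow> int"
  have T: "int T = Q div int d" using Q d by (simp add: T_def pos_imp_zdiv_nonneg_iff)
  have "inj scale" using d by (auto simp: inj_def scale_def fun_eq_iff)
  have "{x \<in> lattice_box s Q - {\<lambda>_. 0}. \<forall>j<s. int d dvd x j}
          = {x \<in> lattice_box s Q. \<forall>j<s. int d dvd x j} - scale ` {\<lambda>_. 0}"
    by (auto simp: scale_def)
  also have "\<dots> = scale ` lattice_box s (int T) - scale ` {\<lambda>_. 0}"
    unfolding T scale_def using lattice_box_multiples[of "int d" s Q] d by simp
  also have "\<dots> = scale ` (lattice_box s (int T) - {\<lambda>_. 0})"
    by (rule image_set_diff[symmetric, OF \<open>inj scale\<close>])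
  finally have multiples: "{x \<in> lattice_box s Q - {\<lambda>_. 0}. \<forall>j<s. int d dvd x j}
      = scale ` (lattice_box s (int T) - {\<lambda>_. 0})" .
  have "(\<Sum>x \<in> {x \<in> lattice_box s Q - {\<lambda>_. 0}. \<forall>j<s. int d dvd x j}.
                 (real d / real_of_int (supnorm s x)) ^ k)
               = (\<Sum>z \<in> lattice_box s (int T) - {\<lambda>_. 0}. (real d / real_of_int (supnorm s (scale z))) ^ k)"
    unfolding multiples by (simp add: sum.reindex[OF inj_on_subset[OF \<open>inj scale\<close> subset_UNIV]])
  also have "\<dots> = (\<Sum>z \<in> lattice_box s (int T) - {\<lambda>_. 0}. 1 / real_of_int (supnorm s z) ^ k)"
    using d by (simp add: scale_def supnorm_mult power_divide)
  also have "\<dots> \<le> 2 * real s * 3 ^ (s - 1) * real T ^ (s - k)"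
    using s by (intro sum_inverse_supnorm_power_le) simp
  also have "\<dots> \<le> 2 * real s * 3 ^ (s - 1) * real_of_int Q ^ (s - k) / real d ^ 2"
  proof -
    have "real T \<le> real_of_int Q / real d"
      using T d by (metis of_int_of_nat_eq real_of_int_div4)
    then have "real T ^ (s - k) \<le> real_of_int Q ^ (s - k) / real d ^ (s - k)"
      by (simp add: power_mono flip: power_divide)
    also have "\<dots> \<le> real_of_int Q ^ (s - k) / real d ^ 2"
      using s d Q by (intro divide_left_mono power_increasing) auto
    finally show ?thesis by (simp add: mult_left_mono flip: times_divide_eq_right)
  qed
  finally show ?thesis .
qed

lemma sum_Gcd_supnorm_ratio_power_le:
  assumes s: "k + 2 \<le> s" and Q: "0 \<le> Q"
  shows "(\<Sum>x \<in> lattice_box s Q - {\<lambda>_. 0}.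
            (real_of_int (Gcd (x ` {..<s})) / real_of_int (supnorm s x)) ^ k)
           \<le> pi ^ 2 / 6 * (2 * real s * 3 ^ (s - 1)) * real_of_int Q ^ (s - k)"
proof -
  define c where "c = 2 * real s * 3 ^ (s - 1) * real_of_int Q ^ (s - k)"
  define E where "E = lattice_box s Q - {\<lambda>_. 0}"
  define h where "h d x = (if \<forall>j<s. int d dvd x j then (real d / real_of_int (supnorm s x)) ^ k else 0)"
    for d :: nat and x
  txt \<open>Each term is the summand \<open>d = Gcd\<close> of the nonnegative sum over all common divisors \<open>d\<close>.\<close>
  have "(real_of_int (Gcd (x ` {..<s})) / real_of_int (supnorm s x)) ^ k \<le> (\<Sum>d=1..nat Q. h d x)"
    if x: "x \<in> E" for x
  proof -
    define G where "G = Gcd (x ` {..<s})"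
    have G: "0 < G" "G \<le> Q" using x Gcd_lattice_box_bounds by (auto simp: E_def G_def)
    then have "h (nat G) x \<le> (\<Sum>d=1..nat Q. h d x)"
      by (intro member_le_sum) (auto simp: h_def supnorm_nonneg)
    then show ?thesis using G by (simp add: h_def G_def Gcd_dvd)
  qed
  then have "(\<Sum>x\<in>E. (real_of_int (Gcd (x ` {..<s})) / real_of_int (supnorm s x)) ^ k)
               \<le> (\<Sum>x\<in>E. \<Sum>d=1..nat Q. h d x)"
    by (rule sum_mono)
  also have "\<dots> = (\<Sum>d=1..nat Q. \<Sum>x\<in>E. h d x)" by (rule sum.swap)
  also have "\<dots> \<le> (\<Sum>d=1..nat Q. c * (1 / real d ^ 2))"
  proof (rule sum_mono)
    fix d assume "d \<in> {1..nat Q}"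
    have "(\<Sum>x\<in>E. h d x)
            = (\<Sum>x \<in> {x \<in> E. \<forall>j<s. int d dvd x j}. (real d / real_of_int (supnorm s x)) ^ k)"
      unfolding h_def by (rule sum.inter_filter[symmetric]) (simp add: E_def finite_lattice_box)
    with \<open>d \<in> {1..nat Q}\<close> show "(\<Sum>x\<in>E. h d x) \<le> c * (1 / real d ^ 2)"
      using sum_multiples_supnorm_power_le[OF s _ Q, of d] by (simp add: c_def E_def)
  qed
  also have "\<dots> = c * (\<Sum>d=1..nat Q. 1 / real d ^ 2)" by (simp add: sum_distrib_left)
  also have "\<dots> \<le> c * (pi ^ 2 / 6)"
    using Q by (intro mult_left_mono sum_inverse_squares_le) (simp add: c_def)
  finally show ?thesis by (simp add: c_def E_def ac_simps)
qed

section \<open>Counting solutions\<close>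

lemma floor_power_le_floor:
  fixes A B :: real
  assumes "0 \<le> B" "B ^ k \<le> A" shows "\<lfloor>B\<rfloor> ^ k \<le> \<lfloor>A\<rfloor>"
proof -
  have "real_of_int \<lfloor>B\<rfloor> ^ k \<le> B ^ k" using assms(1) by (intro power_mono) auto
  with assms(2) show ?thesis by (simp add: le_floor_iff)
qed

lemma Xi_le_sum_card_zeros:
  "real (Xi k s A B)
     \<le> (\<Sum>x \<in> lattice_box s \<lfloor>B\<rfloor> - {\<lambda>_. 0}.
          real (card {a \<in> lattice_box s \<lfloor>A\<rfloor>. (\<Sum>j<s. a j * x j ^ k) = 0}))"
proof -
  define E where "E = lattice_box s \<lfloor>B\<rfloor> - {\<lambda>_. 0}"
  define N where "N x = {a \<in> lattice_box s \<lfloor>A\<rfloor>. (\<Sum>j<s. a j * x j ^ k) = 0}" for x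
  have "Xi_set k s A B \<subseteq> (\<lambda>(x, a). (a, x)) ` Sigma E N"
  proof clarify
    fix a x assume ax: "(a, x) \<in> Xi_set k s A B"
    then have "supnorm s a \<le> \<lfloor>A\<rfloor>" "supnorm s x \<le> \<lfloor>B\<rfloor>"
      by (auto simp: Xi_set_def le_floor_iff)
    then have "a \<in> lattice_box s \<lfloor>A\<rfloor>" "x \<in> lattice_box s \<lfloor>B\<rfloor>"
      using ax by (auto simp: Xi_set_def lattice_box_iff_supnorm[OF order_trans[OF supnorm_nonneg]])
    then have "x \<in> E" "a \<in> N x"
      using ax supnorm_pos_iff by (auto simp: Xi_set_def E_def N_def)
    then show "(a, x) \<in> (\<lambda>(x, a). (a, x)) ` Sigma E N" by force
  qed
  then have "card (Xi_set k s A B) \<le> card ((\<lambda>(x, a). (a, x)) ` Sigma E N)"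
    by (rule card_mono[rotated]) (auto simp: E_def N_def finite_lattice_box)
  also have "\<dots> \<le> card (Sigma E N)" by (rule card_image_le) (auto simp: E_def N_def finite_lattice_box)
  also have "\<dots> = (\<Sum>x\<in>E. card (N x))"
    by (rule card_SigmaI) (auto simp: E_def N_def finite_lattice_box)
  finally show ?thesis by (simp add: Xi_def E_def N_def flip: of_nat_sum)
qed

lemma Xi_explicit_bound:
  assumes k: "0 < k" "k + 2 \<le> s" and A: "1 \<le> A" and B: "1 \<le> B" "B ^ k \<le> A"
  shows "real (Xi k s A B)
           \<le> (2 * real s + 5) ^ s * (pi ^ 2 / 6 * (2 * real s * 3 ^ (s - 1))) * A ^ (s - 1) * B ^ (s - k)"
proof -
  define K :: real where "K = (2 * real s + 5) ^ s"
  define c :: real where "c = pi ^ 2 / 6 * (2 * real s * 3 ^ (s - 1))"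
  define ratio where "ratio x = real_of_int (Gcd (x ` {..<s})) / real_of_int (supnorm s x)" for x
  define E where "E = lattice_box s \<lfloor>B\<rfloor> - {\<lambda>_. 0}"
  have QP: "\<lfloor>B\<rfloor> ^ k \<le> \<lfloor>A\<rfloor>" using B by (intro floor_power_le_floor) auto
  have "real (Xi k s A B)
          \<le> (\<Sum>x\<in>E. real (card {a \<in> lattice_box s \<lfloor>A\<rfloor>. (\<Sum>j<s. a j * x j ^ k) = 0}))"
    unfolding E_def by (rule Xi_le_sum_card_zeros)
  also have "\<dots> \<le> (\<Sum>x\<in>E. K * real_of_int \<lfloor>A\<rfloor> ^ (s - 1) * ratio x ^ k)"
    unfolding E_def K_def ratio_def using k QP
    by (intro sum_mono card_diagonal_form_zeros_le) auto
  also have "\<dots> = K * real_of_int \<lfloor>A\<rfloor> ^ (s - 1) * (\<Sum>x\<in>E. ratio x ^ k)"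
    by (simp add: sum_distrib_left)
  also have "\<dots> \<le> K * real_of_int \<lfloor>A\<rfloor> ^ (s - 1) * (c * real_of_int \<lfloor>B\<rfloor> ^ (s - k))"
    using k A B sum_Gcd_supnorm_ratio_power_le[of k s "\<lfloor>B\<rfloor>"]
    by (intro mult_left_mono) (auto simp: E_def K_def c_def ratio_def)
  also have "\<dots> \<le> K * A ^ (s - 1) * (c * B ^ (s - k))"
    using A B by (intro mult_mono mult_left_mono power_mono) (auto simp: K_def c_def)
  finally show ?thesis by (simp add: K_def c_def ac_simps)
qed

theorem lemma2p3:
  fixes k s :: nat
  assumes "k \<ge> 3" and "s \<ge> k + 2"
  shows "\<exists>C>0. \<forall>A B :: real. A \<ge> 1 \<longrightarrow> B \<ge> 1 \<longrightarrow> B ^ k \<le> A \<longrightarrow>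
           real (Xi k s A B) \<le> C * A ^ (s - 1) * B ^ (s - k)"
proof (intro exI conjI allI impI)
  show "0 < (2 * real s + 5) ^ s * (pi ^ 2 / 6 * (2 * real s * 3 ^ (s - 1)))"
    using assms by simp
next
  fix A B :: real assume "A \<ge> 1" "B \<ge> 1" "B ^ k \<le> A"
  with assms show "real (Xi k s A B)
      \<le> (2 * real s + 5) ^ s * (pi ^ 2 / 6 * (2 * real s * 3 ^ (s - 1))) * A ^ (s - 1) * B ^ (s - k)"
    by (intro Xi_explicit_bound) auto
qed

end
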